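(* Let $H\in\mathbb{R}^{\ell\times\ell}$ be symmetric, $0\ne g_0\in\mathbb{R}^\ell$, $\gamma>0$, and let $(\lambda_*,w_* )$ be a minimizer of pQEPmin. (1) If $g_0^{\top}w_*\ne0$ for all minimizers $(\lambda_*,w_* )$ of pQEPmin, then $\lambda_*<\lambda_{\min}(H)$ and the minimizer of pLGopt is unique. (2) If there exists a minimizer $(\lambda_*,w_* )$ of pQEPmin with $g_0^{\top}w_*=0$, then $\lambda_*=\lambda_{\min}(H)$, and the minimizer of pLGopt is unique if and only if $\|x_*\|=\gamma$, where $x_*=-(H-\lambda_*I)^{\dagger}g_0$.
   Context: pLGopt: minimize $\lambda$ over pairs $(\lambda,y)\in\mathbb{R}\times\mathbb{R}^\ell$ with $(H-\lambda I)y=-g_0$ and $\|y\|=\gamma$. pQEPmin: minimize $\lambda$ over pairs $(\lambda,w)$ with $\lambda\in\mathbb{R}$, $0\ne w\in\mathbb{R}^\ell$ and $(H-\lambda I)^2w=\gamma^{-2}g_0g_0^{\top}w$. $\lambda_{\min}(H)$ is the smallest eigenvalue of $H$; $X^\dagger$ is the Moore–Penrose inverse. *)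

theory Defs
  imports "HOL-Analysis.Analysis"
begin

definition pLG_feasible :: "real^'n^'n \<Rightarrow> real^'n \<Rightarrow> real \<Rightarrow> real \<times> (real^'n) \<Rightarrow> bool" where
  "pLG_feasible H g0 \<gamma> p \<longleftrightarrow>
     (H - fst p *\<^sub>R mat 1) *v snd p = - g0 \<and> norm (snd p) = \<gamma>"

definition pLG_minimizer :: "real^'n^'n \<Rightarrow> real^'n \<Rightarrow> real \<Rightarrow> real \<times> (real^'n) \<Rightarrow> bool" where
  "pLG_minimizer H g0 \<gamma> p \<longleftrightarrow>
     pLG_feasible H g0 \<gamma> p \<and> (\<forall>q. pLG_feasible H g0 \<gamma> q \<longrightarrow> fst p \<le> fst q)"

definition pQEP_feasible :: "real^'n^'n \<Rightarrow> real^'n \<Rightarrow> real \<Rightarrow> real \<times> (real^'n) \<Rightarrow> bool" where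
  "pQEP_feasible H g0 \<gamma> p \<longleftrightarrow>
     snd p \<noteq> 0 \<and>
     ((H - fst p *\<^sub>R mat 1) ** (H - fst p *\<^sub>R mat 1)) *v snd p
        = (inverse (\<gamma>^2)) *\<^sub>R ((g0 \<bullet> snd p) *\<^sub>R g0)"

definition pQEP_minimizer :: "real^'n^'n \<Rightarrow> real^'n \<Rightarrow> real \<Rightarrow> real \<times> (real^'n) \<Rightarrow> bool" where
  "pQEP_minimizer H g0 \<gamma> p \<longleftrightarrow>
     pQEP_feasible H g0 \<gamma> p \<and> (\<forall>q. pQEP_feasible H g0 \<gamma> q \<longrightarrow> fst p \<le> fst q)"

definition lambda_min :: "real^'n^'n \<Rightarrow> real" where
  "lambda_min H = Min {\<mu>. \<exists>v. v \<noteq> 0 \<and> H *v v = \<mu> *\<^sub>R v}"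

definition mp_pinv :: "real^'n^'m \<Rightarrow> real^'m^'n" where
  "mp_pinv A = (THE X. A ** X ** A = A \<and> X ** A ** X = X \<and>
                      transpose (A ** X) = A ** X \<and> transpose (X ** A) = X ** A)"

end

(* Below lambda_min = lambda_min(H) the matrix H - mu I is invertible, and both problems reduce to the
   secular equation ||(H - mu I)^-1 g0|| = gamma: its roots mu give the pLG pairs
   (mu, -(H - mu I)^-1 g0) and, with w = (H - mu I)^-2 g0, the pQEP pairs. A pQEP pair with
   g0^T w = 0 is an eigenpair of H, so its lambda is at least lambda_min. If g0 is not orthogonal to
   some lambda_min-eigenvector u, the secular function exceeds gamma near lambda_min and the equation
   has a root below it; otherwise (lambda_min, u) is a pQEP pair. Hence lam <= lambda_min, with
   equality exactly when some pQEP minimizer is orthogonal to g0.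
   If lam < lambda_min, the unique pLG minimizer is (lam, -(H - lam I)^-1 g0). If lam = lambda_min,
   then g0 is orthogonal to ker (H - lam I), so x_* solves (H - lam I) x = -g0 and lies in the range of
   H - lam I; as the secular function tends to ||x_*|| at lambda_min and has no root below it,
   ||x_*|| <= gamma. The pLG minimizers are then the pairs (lam, x_* + k) with k in the kernel and
   ||x_*||^2 + ||k||^2 = gamma^2. Together with k also -k qualifies, so the minimizer is unique
   iff ||x_*|| = gamma. *)

theory Submission
  imports Defs
begin

lemma symmetric_matrix_inner:
  fixes M :: "real^'n^'n"
  assumes "transpose M = M"
  shows "(M *v x) \<bullet> y = x \<bullet> (M *v y)"
proof -
  have "x \<bullet> (M *v y) = (transpose M *v x) \<bullet> y"
    by (simp add: dot_lmul_matrix)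
  then show ?thesis
    using assms by simp
qed

lemma symmetric_matrix_if_inner:
  fixes M :: "real^'n^'n"
  assumes "\<And>x y. (M *v x) \<bullet> y = x \<bullet> (M *v y)"
  shows "transpose M = M"
proof -
  have "x \<bullet> (transpose M *v y - M *v y) = 0" for x y
    using assms[of x y] by (simp add: inner_diff_right dot_lmul_matrix[symmetric] inner_commute)
  then show ?thesis
    by (metis inner_eq_zero_iff matrix_eq right_minus_eq)
qed

lemma scaleR_mat_1_vector_mult [simp]: "(c *\<^sub>R mat 1) *v (x::real^'n) = c *\<^sub>R x"
  by (simp flip: scaleR_matrix_vector_assoc)

lemma matrix_vector_mult_uminus [simp]: "(A::real^'n^'m) *v (- x) = - (A *v x)"
  using linear_neg[OF matrix_vector_mul_linear[of A]] by simp

lemma matrix_vector_mult_shift: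
  "((H::real^'n^'n) - c *\<^sub>R mat 1) *v x = H *v x - c *\<^sub>R x"
  by (simp add: matrix_vector_mult_diff_rdistrib)

lemma transpose_shift: "transpose ((H::real^'n^'n) - c *\<^sub>R mat 1) = transpose H - c *\<^sub>R mat 1"
  by (simp add: transpose_def vec_eq_iff mat_def)

lemma matrix_inv_vector_mult:
  fixes M :: "real^'n^'n"
  assumes "invertible M"
  shows "M *v (matrix_inv M *v x) = x" "matrix_inv M *v (M *v x) = x"
proof -
  have "M ** matrix_inv M = mat 1 \<and> matrix_inv M ** M = mat 1"
    using assms unfolding matrix_inv_def invertible_def by (rule someI_ex)
  then show "M *v (matrix_inv M *v x) = x" "matrix_inv M *v (M *v x) = x"
    by (simp_all add: matrix_vector_mul_assoc)
qed

lemma invertible_if_kernel_trivial: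
  fixes M :: "real^'n^'n"
  assumes "\<And>x. M *v x = 0 \<Longrightarrow> x = 0"
  shows "invertible M"
  using assms invertible_left_inverse matrix_left_invertible_ker by blast

lemma linear_coeff_zero_if_quadratic_nonneg:
  fixes c d :: real
  assumes "d \<ge> 0" and "\<And>t. 2 * t * c + t\<^sup>2 * d \<ge> 0"
  shows "c = 0"
proof (rule ccontr)
  assume "c \<noteq> 0"
  define t where "t = - c / (d + 1)"
  have td: "t * (d + 1) = - c"
    using assms(1) by (simp add: t_def)
  have "(d + 1)\<^sup>2 * (2 * t * c + t\<^sup>2 * d) = 2 * c * (t * (d + 1)) * (d + 1) + (t * (d + 1))\<^sup>2 * d"
    by (simp add: power2_eq_square algebra_simps)
  also have "\<dots> = - (c\<^sup>2 * (d + 2))"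
    unfolding td by (simp add: power2_eq_square algebra_simps)
  also have "\<dots> < 0"
    using \<open>c \<noteq> 0\<close> assms(1) by (simp add: mult_pos_pos)
  finally show False
    using assms by (metis zero_le_power2 zero_le_mult_iff not_le)
qed

section \<open>Smallest eigenvalue and resolvent of a symmetric matrix\<close>

lemma rayleigh_form_attains_min_on_sphere:
  fixes H :: "real^'n^'n"
  obtains v where "norm v = 1" "\<And>x. (v \<bullet> (H *v v)) * (x \<bullet> x) \<le> x \<bullet> (H *v x)"
proof -
  define f where "f x = x \<bullet> (H *v x)" for x
  have "continuous_on (sphere 0 1) f"
    unfolding f_def by (intro continuous_intros linear_continuous_on matrix_vector_mul_bounded_linear)
  moreover have "sphere (0::real^'n) 1 \<noteq> {}"
    using vector_choose_size[of 1] by auto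
  ultimately obtain v where v: "norm v = 1" "\<And>y. norm y = 1 \<Longrightarrow> f v \<le> f y"
    using continuous_attains_inf[OF compact_sphere] by (metis mem_sphere_0)
  have "f v * (x \<bullet> x) \<le> f x" for x
  proof (cases "x = 0")
    case False
    have "f v \<le> f ((1 / norm x) *\<^sub>R x)"
      using False by (intro v(2)) simp
    also have "\<dots> = f x / (x \<bullet> x)"
      by (simp add: f_def matrix_vector_mult_scaleR power2_eq_square power2_norm_eq_inner[symmetric])
    finally show ?thesis
      using False by (simp add: field_simps)
  qed (simp add: f_def)
  then show ?thesis
    using that v(1) by (simp add: f_def)
qed

(* Only meaningful for mu below lambda_min H; for singular H - mu I, matrix_inv is an unspecified matrix. *)
definition resolvent :: "real^'n^'n \<Rightarrow> real \<Rightarrow> real^'n^'n" where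
  "resolvent H \<mu> = matrix_inv (H - \<mu> *\<^sub>R mat 1)"

context
  fixes H :: "real^'n^'n"
  assumes symmetric: "transpose H = H"
begin

lemma eigenvector_if_rayleigh_bound_attained:
  assumes bound: "\<And>x. m * (x \<bullet> x) \<le> x \<bullet> (H *v x)"
    and attained: "v \<bullet> (H *v v) = m * (v \<bullet> v)"
  shows "H *v v = m *\<^sub>R v"
proof -
  define B where "B = H - m *\<^sub>R mat 1"
  have B_sym: "v \<bullet> (B *v u) = u \<bullet> (B *v v)" for u
    using symmetric_matrix_inner[of B u v] symmetric
    by (simp add: B_def transpose_shift inner_commute)
  have B_nonneg: "0 \<le> x \<bullet> (B *v x)" for x
    using bound[of x] by (simp add: B_def matrix_vector_mult_shift inner_diff_right)
  have "u \<bullet> (B *v v) = 0" for u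
  proof (rule linear_coeff_zero_if_quadratic_nonneg)
    show "0 \<le> u \<bullet> (B *v u)"
      by (rule B_nonneg)
    fix t :: real
    have "(v + t *\<^sub>R u) \<bullet> (B *v (v + t *\<^sub>R u))
        = v \<bullet> (B *v v) + 2 * t * (u \<bullet> (B *v v)) + t\<^sup>2 * (u \<bullet> (B *v u))"
      using B_sym[of u]
      by (simp add: matrix_vector_right_distrib matrix_vector_mult_scaleR inner_add_left
          inner_add_right inner_commute power2_eq_square algebra_simps)
    moreover have "v \<bullet> (B *v v) = 0"
      using attained by (simp add: B_def matrix_vector_mult_shift inner_diff_right)
    ultimately show "0 \<le> 2 * t * (u \<bullet> (B *v v)) + t\<^sup>2 * (u \<bullet> (B *v u))"
      using B_nonneg[of "v + t *\<^sub>R u"] by simp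
  qed
  from this[of "B *v v"] show ?thesis
    by (simp add: B_def matrix_vector_mult_shift)
qed

lemma eigenvectors_orthogonal:
  assumes "H *v a = \<mu> *\<^sub>R a" "H *v b = \<nu> *\<^sub>R b" "\<mu> \<noteq> \<nu>"
  shows "a \<bullet> b = 0"
proof -
  have "\<mu> * (a \<bullet> b) = \<nu> * (a \<bullet> b)"
    using symmetric_matrix_inner[OF symmetric, of a b] assms by simp
  then show ?thesis
    using assms(3) by simp
qed

lemma finite_eigenvalues: "finite {\<mu>. \<exists>v. v \<noteq> 0 \<and> H *v v = \<mu> *\<^sub>R v}"
  (is "finite ?E")
proof -
  define f where "f \<mu> = (SOME v. v \<noteq> 0 \<and> H *v v = \<mu> *\<^sub>R v)" for \<mu>
  have f: "f \<mu> \<noteq> 0 \<and> H *v f \<mu> = \<mu> *\<^sub>R f \<mu>" if "\<mu> \<in> ?E" for \<mu>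
    using that unfolding f_def mem_Collect_eq
    by (rule someI_ex[of "\<lambda>v. v \<noteq> 0 \<and> H *v v = \<mu> *\<^sub>R v"])
  have "inj_on f ?E"
  proof (rule inj_onI)
    fix \<mu> \<nu> assume E: "\<mu> \<in> ?E" "\<nu> \<in> ?E" and eq: "f \<mu> = f \<nu>"
    have "\<mu> *\<^sub>R f \<mu> = H *v f \<nu>"
      using f[OF E(1)] eq by simp
    also have "\<dots> = \<nu> *\<^sub>R f \<mu>"
      using f[OF E(2)] eq by simp
    finally show "\<mu> = \<nu>"
      using f[OF E(1)] by simp
  qed
  moreover have "independent (f ` ?E)"
  proof (rule pairwise_orthogonal_independent)
    show "pairwise orthogonal (f ` ?E)"
      unfolding pairwise_def orthogonal_def using f eigenvectors_orthogonal by blast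
    show "0 \<notin> f ` ?E"
    proof
      assume "0 \<in> f ` ?E"
      then obtain \<mu> where "\<mu> \<in> ?E" "f \<mu> = 0"
        by (rule imageE) simp
      then show False
        using f[of \<mu>] by simp
    qed
  qed
  ultimately show ?thesis
    using independent_bound finite_imageD by blast
qed

lemma lambda_min_rayleigh:
  obtains v where "norm v = 1" "H *v v = lambda_min H *\<^sub>R v"
    "\<And>x. lambda_min H * (x \<bullet> x) \<le> x \<bullet> (H *v x)"
proof -
  obtain v where v: "norm v = 1" and "\<And>x. (v \<bullet> (H *v v)) * (x \<bullet> x) \<le> x \<bullet> (H *v x)"
    using rayleigh_form_attains_min_on_sphere[of H] by blast
  moreover define m where "m = v \<bullet> (H *v v)"
  ultimately have bound: "\<And>x. m * (x \<bullet> x) \<le> x \<bullet> (H *v x)"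
    by simp
  have "v \<bullet> v = 1"
    using v by (simp add: power2_norm_eq_inner[symmetric])
  then have eig: "H *v v = m *\<^sub>R v"
    using bound by (intro eigenvector_if_rayleigh_bound_attained) (simp_all add: m_def)
  have "lambda_min H = m"
    unfolding lambda_min_def
  proof (rule Min_eqI[OF finite_eigenvalues])
    have "v \<noteq> 0"
      using v by auto
    then show "m \<in> {\<mu>. \<exists>v. v \<noteq> 0 \<and> H *v v = \<mu> *\<^sub>R v}"
      using eig by blast
    fix \<mu> assume "\<mu> \<in> {\<mu>. \<exists>v. v \<noteq> 0 \<and> H *v v = \<mu> *\<^sub>R v}"
    then obtain u where "u \<noteq> 0" "H *v u = \<mu> *\<^sub>R u"
      by blast
    then show "m \<le> \<mu>"
      using bound[of u] by simp
  qed
  then show ?thesis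
    using that v eig bound by simp
qed

lemma lambda_min_le_rayleigh: "lambda_min H * (x \<bullet> x) \<le> x \<bullet> (H *v x)"
  using lambda_min_rayleigh by metis

lemma lambda_min_le_eigenvalue:
  assumes "v \<noteq> 0" "H *v v = \<mu> *\<^sub>R v"
  shows "lambda_min H \<le> \<mu>"
  using lambda_min_le_rayleigh[of v] assms by simp

lemma norm_shift_ge_below_lambda_min:
  assumes "\<mu> < lambda_min H"
  shows "(lambda_min H - \<mu>) * norm z \<le> norm ((H - \<mu> *\<^sub>R mat 1) *v z)"
proof (cases "z = 0")
  case False
  let ?A = "H - \<mu> *\<^sub>R mat 1"
  have "lambda_min H * (norm z)\<^sup>2 \<le> z \<bullet> (H *v z)"
    using lambda_min_le_rayleigh[of z] by (simp add: power2_norm_eq_inner)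
  then have "norm z * ((lambda_min H - \<mu>) * norm z) \<le> z \<bullet> (?A *v z)"
    by (simp add: matrix_vector_mult_shift inner_diff_right algebra_simps power2_eq_square
        flip: power2_norm_eq_inner)
  also have "\<dots> \<le> norm z * norm (?A *v z)"
    by (rule norm_cauchy_schwarz)
  finally show ?thesis
    using False by simp
qed simp

lemma resolvent_inverse:
  assumes "\<mu> < lambda_min H"
  shows "(H - \<mu> *\<^sub>R mat 1) *v (resolvent H \<mu> *v x) = x"
    and "resolvent H \<mu> *v ((H - \<mu> *\<^sub>R mat 1) *v x) = x"
proof -
  have "invertible (H - \<mu> *\<^sub>R mat 1)"
  proof (rule invertible_if_kernel_trivial)
    fix x assume "(H - \<mu> *\<^sub>R mat 1) *v x = 0"
    then have "(lambda_min H - \<mu>) * norm x \<le> 0"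
      using norm_shift_ge_below_lambda_min[OF assms, of x] by simp
    then show "x = 0"
      using assms by (simp add: mult_le_0_iff)
  qed
  then show "(H - \<mu> *\<^sub>R mat 1) *v (resolvent H \<mu> *v x) = x"
    and "resolvent H \<mu> *v ((H - \<mu> *\<^sub>R mat 1) *v x) = x"
    unfolding resolvent_def by (rule matrix_inv_vector_mult)+
qed

lemma norm_resolvent_le:
  assumes "\<mu> < lambda_min H"
  shows "norm (resolvent H \<mu> *v x) \<le> norm x / (lambda_min H - \<mu>)"
  using norm_shift_ge_below_lambda_min[OF assms, of "resolvent H \<mu> *v x"] assms
  by (simp add: resolvent_inverse(1)[OF assms] field_simps)

lemma resolvent_inner_commute:
  assumes "\<mu> < lambda_min H"
  shows "x \<bullet> (resolvent H \<mu> *v y) = (resolvent H \<mu> *v x) \<bullet> y"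
  using symmetric_matrix_inner[of "H - \<mu> *\<^sub>R mat 1" "resolvent H \<mu> *v x" "resolvent H \<mu> *v y"]
  by (simp add: transpose_shift symmetric resolvent_inverse(1)[OF assms])

lemma resolvent_identity:
  assumes "\<mu> < lambda_min H" "\<nu> < lambda_min H"
  shows "resolvent H \<mu> *v g - resolvent H \<nu> *v g
    = (\<mu> - \<nu>) *\<^sub>R (resolvent H \<mu> *v (resolvent H \<nu> *v g))"
proof -
  let ?a = "resolvent H \<mu> *v g" and ?b = "resolvent H \<nu> *v g"
  have "(H - \<mu> *\<^sub>R mat 1) *v (?a - ?b) = (\<mu> - \<nu>) *\<^sub>R ?b"
    using resolvent_inverse(1)[OF assms(1), of g] resolvent_inverse(1)[OF assms(2), of g]
    by (simp add: matrix_vector_mult_shift matrix_vector_mult_diff_distrib algebra_simps)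
  then have "resolvent H \<mu> *v ((H - \<mu> *\<^sub>R mat 1) *v (?a - ?b))
      = (\<mu> - \<nu>) *\<^sub>R (resolvent H \<mu> *v ?b)"
    by (simp add: matrix_vector_mult_scaleR)
  then show ?thesis
    by (simp add: resolvent_inverse(2)[OF assms(1)])
qed

lemma lipschitz_on_norm_resolvent:
  assumes "b < lambda_min H"
  shows "(norm g / (lambda_min H - b)\<^sup>2)-lipschitz_on {..b} (\<lambda>\<mu>. norm (resolvent H \<mu> *v g))"
proof (rule lipschitz_onI)
  let ?L = "lambda_min H"
  fix \<mu> \<nu> assume "\<mu> \<in> {..b}" "\<nu> \<in> {..b}"
  then have \<mu>: "\<mu> < ?L" "?L - b \<le> ?L - \<mu>" and \<nu>: "\<nu> < ?L" "?L - b \<le> ?L - \<nu>"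
    using assms by auto
  have "norm (resolvent H \<mu> *v (resolvent H \<nu> *v g)) \<le> norm (resolvent H \<nu> *v g) / (?L - \<mu>)"
    by (rule norm_resolvent_le[OF \<mu>(1)])
  also have "\<dots> \<le> norm g / ((?L - \<nu>) * (?L - \<mu>))"
    using divide_right_mono[OF norm_resolvent_le[OF \<nu>(1), of g], of "?L - \<mu>"] \<mu>(1) by simp
  also have "\<dots> \<le> norm g / (?L - b)\<^sup>2"
    using \<mu> \<nu> assms
    by (intro divide_left_mono) (simp_all add: power2_eq_square mult_mono)
  finally have bound: "norm (resolvent H \<mu> *v (resolvent H \<nu> *v g)) \<le> norm g / (?L - b)\<^sup>2" .
  have "dist (norm (resolvent H \<mu> *v g)) (norm (resolvent H \<nu> *v g))
      \<le> norm (resolvent H \<mu> *v g - resolvent H \<nu> *v g)"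
    by (simp add: dist_real_def norm_triangle_ineq3)
  also have "\<dots> = \<bar>\<mu> - \<nu>\<bar> * norm (resolvent H \<mu> *v (resolvent H \<nu> *v g))"
    by (simp add: resolvent_identity[OF \<mu>(1) \<nu>(1)])
  also have "\<dots> \<le> \<bar>\<mu> - \<nu>\<bar> * (norm g / (?L - b)\<^sup>2)"
    by (rule mult_left_mono[OF bound]) simp
  finally show "dist (norm (resolvent H \<mu> *v g)) (norm (resolvent H \<nu> *v g))
      \<le> norm g / (?L - b)\<^sup>2 * dist \<mu> \<nu>"
    by (simp add: dist_real_def mult.commute)
qed simp

lemma secular_equation_solvable_below:
  assumes "b < lambda_min H" "\<gamma> > 0" "\<gamma> \<le> norm (resolvent H b *v g)"
  shows "\<exists>\<mu>\<le>b. norm (resolvent H \<mu> *v g) = \<gamma>"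
proof -
  let ?L = "lambda_min H"
  define a where "a = min b (?L - norm g / \<gamma>)"
  have a: "a \<le> b" "a < ?L"
    using assms(1) by (auto simp: a_def)
  have "norm (resolvent H a *v g) \<le> norm g / (?L - a)"
    by (rule norm_resolvent_le[OF a(2)])
  also have "\<dots> \<le> \<gamma>"
  proof -
    have "norm g / \<gamma> \<le> ?L - a"
      by (simp add: a_def)
    then show ?thesis
      using a(2) assms(2) by (simp add: field_simps)
  qed
  finally have "norm (resolvent H a *v g) \<le> \<gamma>" .
  moreover have "continuous_on {a..b} (\<lambda>\<mu>. norm (resolvent H \<mu> *v g))"
    using lipschitz_on_continuous_on[OF lipschitz_on_norm_resolvent[OF assms(1)]]
    by (rule continuous_on_subset) auto
  ultimately show ?thesis
    using IVT'[of "\<lambda>\<mu>. norm (resolvent H \<mu> *v g)" a \<gamma> b] a(1) assms(3) by auto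
qed

lemma secular_equation_solvable_if_not_orthogonal_eigenvector:
  assumes eig: "H *v u = lambda_min H *\<^sub>R u" and gu: "g \<bullet> u \<noteq> 0" and "\<gamma> > 0"
  shows "\<exists>\<mu><lambda_min H. norm (resolvent H \<mu> *v g) = \<gamma>"
proof -
  let ?L = "lambda_min H"
  have u: "norm u > 0"
    using gu by auto
  define b where "b = ?L - \<bar>g \<bullet> u\<bar> / (\<gamma> * norm u)"
  have b: "b < ?L" "\<bar>g \<bullet> u\<bar> / (?L - b) = \<gamma> * norm u"
    using u gu \<open>\<gamma> > 0\<close> by (simp_all add: b_def)
  have "u = resolvent H b *v ((H - b *\<^sub>R mat 1) *v u)"
    by (simp add: resolvent_inverse(2)[OF b(1)])
  also have "\<dots> = (?L - b) *\<^sub>R (resolvent H b *v u)"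
    using eig by (simp add: matrix_vector_mult_shift matrix_vector_mult_scaleR algebra_simps)
  finally have "u \<bullet> g = (?L - b) * ((resolvent H b *v u) \<bullet> g)"
    by (metis inner_scaleR_left)
  then have "(resolvent H b *v u) \<bullet> g = (g \<bullet> u) / (?L - b)"
    using b(1) by (simp add: inner_commute field_simps)
  then have "\<gamma> * norm u = \<bar>u \<bullet> (resolvent H b *v g)\<bar>"
    using b by (simp add: resolvent_inner_commute abs_div)
  also have "\<dots> \<le> norm u * norm (resolvent H b *v g)"
    by (rule Cauchy_Schwarz_ineq2)
  finally have "\<gamma> \<le> norm (resolvent H b *v g)"
    using u by (simp add: mult.commute)
  then obtain \<mu> where "\<mu> \<le> b" "norm (resolvent H \<mu> *v g) = \<gamma>"
    using secular_equation_solvable_below[OF b(1) \<open>\<gamma> > 0\<close>] by blast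
  then show ?thesis
    using b(1) by (intro exI[of _ \<mu>]) simp
qed

(* (H - mu I)^-1 g + x = (lambda_min - mu) (H - mu I)^-1 x, and (H - mu I)^-1 x stays bounded
   because x lies in the range of H - lambda_min I. *)
lemma norm_resolvent_ge_near_lambda_min:
  assumes x: "(H - lambda_min H *\<^sub>R mat 1) *v x = - g"
    and z: "x = (H - lambda_min H *\<^sub>R mat 1) *v z"
    and \<mu>: "\<mu> < lambda_min H"
  shows "norm x - 2 * (lambda_min H - \<mu>) * norm z \<le> norm (resolvent H \<mu> *v g)"
proof -
  let ?L = "lambda_min H" and ?R = "resolvent H \<mu>"
  have "(H - \<mu> *\<^sub>R mat 1) *v (?R *v g + x) = g + (H - \<mu> *\<^sub>R mat 1) *v x"
    by (simp add: matrix_vector_right_distrib resolvent_inverse(1)[OF \<mu>])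
  also have "\<dots> = (?L - \<mu>) *\<^sub>R x"
    using x by (simp add: matrix_vector_mult_shift algebra_simps)
  finally have Rg: "?R *v g + x = (?L - \<mu>) *\<^sub>R (?R *v x)"
    using resolvent_inverse(2)[OF \<mu>, of "?R *v g + x"] by (simp add: matrix_vector_mult_scaleR)
  have "x = (H - \<mu> *\<^sub>R mat 1) *v z - (?L - \<mu>) *\<^sub>R z"
    using z by (simp add: matrix_vector_mult_shift algebra_simps)
  then have "?R *v x = z - (?L - \<mu>) *\<^sub>R (?R *v z)"
    by (simp add: matrix_vector_mult_diff_distrib matrix_vector_mult_scaleR resolvent_inverse(2)[OF \<mu>])
  then have "norm (?R *v x) \<le> norm z + (?L - \<mu>) * norm (?R *v z)"
    using \<mu> by (metis abs_of_pos diff_gt_0_iff_gt norm_scaleR norm_triangle_ineq4)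
  also have "(?L - \<mu>) * norm (?R *v z) \<le> norm z"
    using norm_resolvent_le[OF \<mu>, of z] \<mu> by (simp add: field_simps)
  finally have "norm (?R *v g + x) \<le> (?L - \<mu>) * (2 * norm z)"
    using \<mu> by (simp add: Rg mult_left_mono)
  moreover have "norm x \<le> norm (?R *v g) + norm (?R *v g + x)"
    by (metis add_diff_cancel_left' norm_triangle_ineq4 norm_minus_commute order_trans norm_triangle_sub)
  ultimately show ?thesis
    by (simp add: algebra_simps)
qed

lemma norm_le_if_secular_equation_unsolvable:
  assumes unsolvable: "\<And>\<mu>. \<mu> < lambda_min H \<Longrightarrow> norm (resolvent H \<mu> *v g) \<noteq> \<gamma>"
    and "\<gamma> > 0"
    and x: "(H - lambda_min H *\<^sub>R mat 1) *v x = - g"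
    and z: "x = (H - lambda_min H *\<^sub>R mat 1) *v z"
  shows "norm x \<le> \<gamma>"
proof (rule ccontr)
  let ?L = "lambda_min H"
  assume "\<not> norm x \<le> \<gamma>"
  have pos: "2 * norm z + 1 > 0"
    by (simp add: add_nonneg_pos)
  define \<delta> where "\<delta> = (norm x - \<gamma>) / (2 * norm z + 1)"
  have "\<delta> > 0"
    using \<open>\<not> norm x \<le> \<gamma>\<close> pos by (simp add: \<delta>_def)
  have "2 * \<delta> * norm z < \<delta> * (2 * norm z + 1)"
    using \<open>\<delta> > 0\<close> by (simp add: algebra_simps)
  also have "\<dots> = norm x - \<gamma>"
    using pos by (simp add: \<delta>_def)
  finally have "\<gamma> \<le> norm (resolvent H (?L - \<delta>) *v g)"
    using norm_resolvent_ge_near_lambda_min[OF x z, of "?L - \<delta>"] \<open>\<delta> > 0\<close> by simp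
  then obtain \<mu> where "\<mu> \<le> ?L - \<delta>" "norm (resolvent H \<mu> *v g) = \<gamma>"
    using secular_equation_solvable_below[of "?L - \<delta>" \<gamma> g] \<open>\<delta> > 0\<close> \<open>\<gamma> > 0\<close> by auto
  then show False
    using unsolvable[of \<mu>] \<open>\<delta> > 0\<close> by simp
qed

lemma pQEP_feasible_iff:
  "pQEP_feasible H g \<gamma> (l, w) \<longleftrightarrow> w \<noteq> 0 \<and>
     (H - l *\<^sub>R mat 1) *v ((H - l *\<^sub>R mat 1) *v w) = ((g \<bullet> w) / \<gamma>\<^sup>2) *\<^sub>R g"
  by (simp add: pQEP_feasible_def matrix_vector_mul_assoc divide_inverse mult.commute)

lemma pQEP_feasible_if_secular:
  assumes \<mu>: "\<mu> < lambda_min H" and secular: "norm (resolvent H \<mu> *v g) = \<gamma>"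
    and "\<gamma> > 0" "g \<noteq> 0"
  shows "pQEP_feasible H g \<gamma> (\<mu>, resolvent H \<mu> *v (resolvent H \<mu> *v g))"
proof -
  let ?w = "resolvent H \<mu> *v (resolvent H \<mu> *v g)"
  have w: "(H - \<mu> *\<^sub>R mat 1) *v ((H - \<mu> *\<^sub>R mat 1) *v ?w) = g"
    by (simp add: resolvent_inverse(1)[OF \<mu>])
  have "g \<bullet> ?w = (resolvent H \<mu> *v g) \<bullet> (resolvent H \<mu> *v g)"
    by (rule resolvent_inner_commute[OF \<mu>])
  also have "\<dots> = \<gamma>\<^sup>2"
    using secular by (simp flip: power2_norm_eq_inner)
  finally have "g \<bullet> ?w = \<gamma>\<^sup>2" .
  moreover have "?w \<noteq> 0"
    using w \<open>g \<noteq> 0\<close> by auto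
  ultimately show ?thesis
    using w \<open>\<gamma> > 0\<close> by (simp add: pQEP_feasible_iff)
qed

lemma lambda_min_le_if_pQEP_feasible_orthogonal:
  assumes "pQEP_feasible H g \<gamma> (l, w)" and "g \<bullet> w = 0"
  shows "lambda_min H \<le> l"
proof -
  let ?A = "H - l *\<^sub>R mat 1"
  have "w \<noteq> 0" and "?A *v (?A *v w) = 0"
    using assms by (simp_all add: pQEP_feasible_iff)
  moreover have "(?A *v w) \<bullet> (?A *v w) = w \<bullet> (?A *v (?A *v w))"
    using symmetric by (simp add: symmetric_matrix_inner transpose_shift)
  ultimately have "H *v w = l *\<^sub>R w"
    by (simp add: matrix_vector_mult_shift)
  then show ?thesis
    using lambda_min_le_eigenvalue[OF \<open>w \<noteq> 0\<close>] by simp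
qed

lemma secular_if_pQEP_feasible:
  assumes l: "l < lambda_min H" and feasible: "pQEP_feasible H g \<gamma> (l, w)" and "\<gamma> > 0"
  shows "norm (resolvent H l *v g) = \<gamma>"
proof -
  let ?A = "H - l *\<^sub>R mat 1" and ?R = "resolvent H l"
  define c where "c = (g \<bullet> w) / \<gamma>\<^sup>2"
  have "g \<bullet> w \<noteq> 0"
    using lambda_min_le_if_pQEP_feasible_orthogonal[OF feasible] l by force
  have "w = ?R *v (?R *v (?A *v (?A *v w)))"
    by (simp add: resolvent_inverse(2)[OF l])
  also have "\<dots> = c *\<^sub>R (?R *v (?R *v g))"
    using feasible by (simp add: pQEP_feasible_iff c_def matrix_vector_mult_scaleR)
  finally have "g \<bullet> w = c * (g \<bullet> (?R *v (?R *v g)))"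
    by (metis inner_scaleR_right)
  also have "g \<bullet> (?R *v (?R *v g)) = (norm (?R *v g))\<^sup>2"
    by (simp add: resolvent_inner_commute[OF l] power2_norm_eq_inner)
  finally have "(norm (?R *v g))\<^sup>2 = \<gamma>\<^sup>2"
    using \<open>g \<bullet> w \<noteq> 0\<close> \<open>\<gamma> > 0\<close> by (simp add: c_def field_simps)
  then show ?thesis
    using \<open>\<gamma> > 0\<close> by (simp add: power2_eq_iff_nonneg)
qed

lemma pLG_feasible_below_lambda_min_iff:
  assumes \<mu>: "\<mu> < lambda_min H"
  shows "pLG_feasible H g \<gamma> (\<mu>, y) \<longleftrightarrow>
    y = - (resolvent H \<mu> *v g) \<and> norm (resolvent H \<mu> *v g) = \<gamma>"
proof -
  have "(H - \<mu> *\<^sub>R mat 1) *v y = - g \<longleftrightarrow> y = - (resolvent H \<mu> *v g)"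
  proof
    assume "(H - \<mu> *\<^sub>R mat 1) *v y = - g"
    then show "y = - (resolvent H \<mu> *v g)"
      using resolvent_inverse(2)[OF \<mu>, of y] by simp
  qed (simp add: resolvent_inverse(1)[OF \<mu>])
  then show ?thesis
    by (auto simp: pLG_feasible_def)
qed

lemma orthogonal_pQEP_feasible_or_secular_root:
  assumes "\<gamma> > 0"
  shows "(\<exists>u. pQEP_feasible H g \<gamma> (lambda_min H, u) \<and> g \<bullet> u = 0)
    \<or> (\<exists>\<mu><lambda_min H. norm (resolvent H \<mu> *v g) = \<gamma>)"
proof -
  obtain u where "norm u = 1" and u: "H *v u = lambda_min H *\<^sub>R u"
    using lambda_min_rayleigh by blast
  show ?thesis
  proof (cases "g \<bullet> u = 0")
    case True
    have "pQEP_feasible H g \<gamma> (lambda_min H, u)"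
      using \<open>norm u = 1\<close> u True by (auto simp: pQEP_feasible_iff matrix_vector_mult_shift)
    then show ?thesis
      using True by blast
  next
    case False
    then show ?thesis
      using secular_equation_solvable_if_not_orthogonal_eigenvector[OF u _ assms] by blast
  qed
qed

end

section \<open>Moore--Penrose inverse of a symmetric matrix\<close>

definition penrose :: "real^'n^'m \<Rightarrow> real^'m^'n \<Rightarrow> bool" where
  "penrose A X \<longleftrightarrow> A ** X ** A = A \<and> X ** A ** X = X \<and>
                      transpose (A ** X) = A ** X \<and> transpose (X ** A) = X ** A"

lemma penrose_transpose:
  assumes "penrose A X"
  shows "penrose (transpose A) (transpose X)"
proof -
  have "transpose A ** transpose X ** transpose A = transpose (A ** X ** A)"
    "transpose X ** transpose A ** transpose X = transpose (X ** A ** X)"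
    "transpose A ** transpose X = transpose (X ** A)"
    "transpose X ** transpose A = transpose (A ** X)"
    by (simp_all add: matrix_transpose_mul matrix_mul_assoc)
  then show ?thesis
    using assms unfolding penrose_def by simp
qed

lemma penrose_right_unique:
  assumes X: "penrose A X" and Y: "penrose A Y"
  shows "X ** A = Y ** A"
proof -
  have "X ** A = X ** (A ** Y ** A)"
    using Y by (simp add: penrose_def)
  also have "\<dots> = X ** A ** (Y ** A)"
    by (simp add: matrix_mul_assoc)
  also have "\<dots> = transpose (X ** A) ** transpose (Y ** A)"
    using X Y by (simp add: penrose_def)
  also have "\<dots> = transpose (Y ** (A ** X ** A))"
    by (simp add: matrix_transpose_mul matrix_mul_assoc)
  also have "\<dots> = Y ** A"
    using X Y by (simp add: penrose_def)
  finally show ?thesis .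
qed

lemma penrose_unique:
  assumes X: "penrose A X" and Y: "penrose A Y"
  shows "X = Y"
proof -
  have "transpose (A ** X) = transpose (A ** Y)"
    using penrose_right_unique[OF penrose_transpose[OF X] penrose_transpose[OF Y]]
    by (simp add: matrix_transpose_mul)
  then have AX: "A ** X = A ** Y"
    by (metis transpose_transpose)
  have "X = X ** (A ** X)"
    using X by (simp add: penrose_def matrix_mul_assoc)
  also have "\<dots> = Y ** A ** Y"
    using penrose_right_unique[OF X Y] by (simp add: AX matrix_mul_assoc)
  also have "\<dots> = Y"
    using Y by (simp add: penrose_def)
  finally show ?thesis .
qed

lemma orthogonal_projection_exists:
  fixes K :: "'a::euclidean_space set"
  assumes "subspace K"
  obtains q where "linear q" "\<And>x. q x \<in> K" "\<And>x k. k \<in> K \<Longrightarrow> k \<bullet> (x - q x) = 0"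
proof -
  obtain B where B: "pairwise orthogonal B" "span B = K"
    using orthogonal_basis_subspace[OF assms] by metis
  define q where "q x = (\<Sum>b\<in>B. (b \<bullet> x / (b \<bullet> b)) *\<^sub>R b)" for x
  have "linear q"
    by (rule linearI) (simp_all add: q_def inner_add_right add_divide_distrib scaleR_add_left
        sum.distrib scaleR_sum_right)
  moreover have "q x \<in> K" for x
    unfolding q_def B(2)[symmetric] by (intro span_sum span_mul span_base)
  moreover have "k \<bullet> (x - q x) = 0" if "k \<in> K" for x k
    using that Gram_Schmidt_step[OF B(1)] B(2) unfolding q_def orthogonal_def by blast
  ultimately show ?thesis
    using that by blast
qed

lemma invertible_add_kernel_projection:
  fixes A :: "real^'n^'n"
  assumes symmetric: "transpose A = A" and "linear q"
    and A_q: "\<And>x. A *v q x = 0"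
    and q_kernel: "\<And>k. A *v k = 0 \<Longrightarrow> q k = k"
  shows "invertible (A + matrix q)"
proof (rule invertible_if_kernel_trivial)
  fix x assume "(A + matrix q) *v x = 0"
  then have Ax: "A *v x = - q x"
    using \<open>linear q\<close> by (simp add: matrix_vector_mult_add_rdistrib matrix_works eq_neg_iff_add_eq_0)
  have "(A *v x) \<bullet> (A *v x) = - (x \<bullet> (A *v q x))"
    using symmetric_matrix_inner[OF symmetric, of x "q x"] by (simp add: Ax)
  then have "A *v x = 0"
    by (simp add: A_q)
  with Ax have "q x = 0" and "q x = x"
    using q_kernel by simp_all
  then show "x = 0"
    by simp
qed

(* With Q the orthogonal projection onto ker A, (A + Q)^-1 - Q inverts A on the orthogonal
   complement of ker A and vanishes on ker A. *)
lemma penrose_from_kernel_projection: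
  fixes A :: "real^'n^'n"
  assumes symmetric: "transpose A = A" and "linear q"
    and A_q: "\<And>x. A *v q x = 0"
    and q_kernel: "\<And>k. A *v k = 0 \<Longrightarrow> q k = k"
    and q_A: "\<And>x. q (A *v x) = 0"
    and q_inner: "\<And>x y. x \<bullet> q y = q x \<bullet> y"
  shows "penrose A (matrix_inv (A + matrix q) - matrix q)"
proof -
  define M where "M = A + matrix q"
  define N where "N = matrix_inv M"
  define X where "X = N - matrix q"
  have Q: "matrix q *v x = q x" for x
    using \<open>linear q\<close> by (simp add: matrix_works)
  have M: "M *v x = A *v x + q x" for x
    by (simp add: M_def matrix_vector_mult_add_rdistrib Q)
  have X: "X *v x = N *v x - q x" for x
    by (simp add: X_def matrix_vector_mult_diff_rdistrib Q)
  have q_idem: "q (q x) = q x" for x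
    using q_kernel[OF A_q] .
  have "invertible M"
    unfolding M_def using symmetric \<open>linear q\<close> A_q q_kernel by (rule invertible_add_kernel_projection)
  then have MN: "M *v (N *v x) = x" and NM: "N *v (M *v x) = x" for x
    unfolding N_def by (rule matrix_inv_vector_mult)+
  have N_q: "N *v q x = q x" for x
    using NM[of "q x"] by (simp add: M A_q q_idem)
  have q_N: "q (N *v x) = q x" for x
    using arg_cong[OF MN[of x], of q] \<open>linear q\<close> by (simp add: M linear_add q_A q_idem)
  have AX: "A *v (X *v x) = x - q x" for x
    using MN[of x] by (simp add: X M q_N A_q matrix_vector_mult_diff_distrib eq_diff_eq)
  have XA: "X *v (A *v x) = x - q x" for x
    using NM[of x] by (simp add: X M q_A N_q matrix_vector_right_distrib eq_diff_eq)
  have "A ** X ** A = A"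
    by (simp add: matrix_eq matrix_vector_mul_assoc[symmetric] XA matrix_vector_mult_diff_distrib A_q)
  moreover have "X ** A ** X = X"
  proof -
    have "X *v (x - q x) = X *v x" for x
      by (simp add: matrix_vector_mult_diff_distrib X N_q q_idem)
    then show ?thesis
      by (simp add: matrix_eq matrix_vector_mul_assoc[symmetric] AX)
  qed
  moreover have "transpose (A ** X) = A ** X"
    by (rule symmetric_matrix_if_inner)
      (simp add: matrix_vector_mul_assoc[symmetric] AX inner_diff_left inner_diff_right q_inner)
  moreover have "transpose (X ** A) = X ** A"
    by (rule symmetric_matrix_if_inner)
      (simp add: matrix_vector_mul_assoc[symmetric] XA inner_diff_left inner_diff_right q_inner)
  ultimately show ?thesis
    by (simp add: penrose_def M_def N_def X_def)
qed

lemma penrose_exists_symmetric: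
  fixes A :: "real^'n^'n"
  assumes symmetric: "transpose A = A"
  shows "\<exists>X. penrose A X"
proof -
  have "subspace {k. A *v k = 0}"
    by (simp add: subspace_def matrix_vector_right_distrib matrix_vector_mult_scaleR)
  then obtain q where "linear q" and q_mem: "\<And>x. q x \<in> {k. A *v k = 0}"
    and q_orth: "\<And>x k. k \<in> {k. A *v k = 0} \<Longrightarrow> k \<bullet> (x - q x) = 0"
    using orthogonal_projection_exists by blast
  have A_q: "A *v q x = 0" for x
    using q_mem by simp
  have orth: "k \<bullet> (x - q x) = 0" if "A *v k = 0" for x k
    using q_orth that by simp
  have q_kernel: "q k = k" if "A *v k = 0" for k
  proof -
    have "A *v (k - q k) = 0"
      using that A_q by (simp add: matrix_vector_mult_diff_distrib)
    then show ?thesis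
      using orth[of "k - q k" k] by simp
  qed
  have q_inner': "x \<bullet> q y = q x \<bullet> q y" for x y
    using orth[OF A_q[of y], of x] by (simp add: inner_diff_right inner_commute)
  have q_inner: "x \<bullet> q y = q x \<bullet> y" for x y
    using q_inner'[of x y] q_inner'[of y x] by (simp add: inner_commute)
  have q_A: "q (A *v x) = 0" for x
  proof -
    have "q (A *v x) \<bullet> q (A *v x) = (A *v q (A *v x)) \<bullet> x"
      using q_inner'[of "A *v x" "A *v x"] symmetric_matrix_inner[OF symmetric, of "q (A *v x)" x]
      by (simp add: inner_commute)
    then show ?thesis
      by (simp add: A_q)
  qed
  show ?thesis
    using penrose_from_kernel_projection[OF symmetric \<open>linear q\<close> A_q q_kernel q_A q_inner] by blast
qed

context
  fixes A :: "real^'n^'n"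
  assumes symmetric: "transpose A = A"
begin

lemma mp_pinv_penrose: "penrose A (mp_pinv A)"
proof -
  have "\<exists>!X. penrose A X"
    using penrose_exists_symmetric[OF symmetric] penrose_unique by blast
  then show ?thesis
    unfolding mp_pinv_def penrose_def[symmetric] by (rule theI')
qed

lemma mp_pinv_symmetric: "transpose (mp_pinv A) = mp_pinv A"
  using penrose_transpose[OF mp_pinv_penrose] symmetric
  by (intro penrose_unique[OF _ mp_pinv_penrose]) simp

lemma mp_pinv_commute: "A ** mp_pinv A = mp_pinv A ** A"
proof -
  have "A ** mp_pinv A = transpose (A ** mp_pinv A)"
    using mp_pinv_penrose by (simp add: penrose_def)
  also have "\<dots> = mp_pinv A ** A"
    by (simp add: matrix_transpose_mul mp_pinv_symmetric symmetric)
  finally show ?thesis .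
qed

lemma mp_pinv_in_range: "mp_pinv A *v g = A *v (mp_pinv A *v (mp_pinv A *v g))"
proof -
  have "mp_pinv A = mp_pinv A ** A ** mp_pinv A"
    using mp_pinv_penrose by (simp add: penrose_def)
  also have "\<dots> = A ** mp_pinv A ** mp_pinv A"
    by (simp add: mp_pinv_commute)
  finally show ?thesis
    by (metis matrix_vector_mul_assoc)
qed

lemma mp_pinv_solves:
  assumes g_kernel: "\<And>k. A *v k = 0 \<Longrightarrow> g \<bullet> k = 0"
  shows "A *v (mp_pinv A *v g) = g"
proof -
  define r where "r = g - A *v (mp_pinv A *v g)"
  have "A ** A ** mp_pinv A = A ** (mp_pinv A ** A)"
    by (simp add: mp_pinv_commute flip: matrix_mul_assoc)
  also have "\<dots> = A"
    using mp_pinv_penrose by (simp add: penrose_def matrix_mul_assoc)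
  finally have "A ** A ** mp_pinv A = A" .
  then have "A *v r = 0"
    by (simp add: r_def matrix_vector_mult_diff_distrib matrix_vector_mul_assoc matrix_mul_assoc)
  then have "g \<bullet> r = 0" and "(A *v (mp_pinv A *v g)) \<bullet> r = 0"
    using g_kernel symmetric_matrix_inner[OF symmetric] by simp_all
  then have "r \<bullet> r = 0"
    by (simp add: r_def inner_diff_left)
  then show ?thesis
    by (simp add: r_def)
qed

end

section \<open>Minimizers of pQEPmin and pLGopt\<close>

locale pQEP_problem =
  fixes H :: "real^'n^'n" and g0 :: "real^'n" and \<gamma> :: real and lam :: real and w :: "real^'n"
  assumes symmetric: "transpose H = H"
    and g0_nonzero: "g0 \<noteq> 0"
    and gamma_pos: "\<gamma> > 0"
    and minimizer: "pQEP_minimizer H g0 \<gamma> (lam, w)"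
begin

lemma lam_le_pQEP_feasible: "pQEP_feasible H g0 \<gamma> (l, v) \<Longrightarrow> lam \<le> l"
  using minimizer by (auto simp: pQEP_minimizer_def)

lemma lam_le_secular_root:
  assumes "\<mu> < lambda_min H" "norm (resolvent H \<mu> *v g0) = \<gamma>"
  shows "lam \<le> \<mu>"
  using lam_le_pQEP_feasible[OF pQEP_feasible_if_secular[OF symmetric assms gamma_pos g0_nonzero]] .

lemma lam_le_lambda_min: "lam \<le> lambda_min H"
  using orthogonal_pQEP_feasible_or_secular_root[OF symmetric gamma_pos, of g0]
    lam_le_pQEP_feasible lam_le_secular_root by force

lemma lam_le_pLG_feasible:
  assumes "pLG_feasible H g0 \<gamma> (\<mu>, y)"
  shows "lam \<le> \<mu>"
proof (cases "\<mu> < lambda_min H")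
  case True
  then show ?thesis
    using assms lam_le_secular_root pLG_feasible_below_lambda_min_iff[OF symmetric True] by blast
next
  case False
  then show ?thesis
    using lam_le_lambda_min by simp
qed

lemma lam_less_lambda_min:
  assumes "\<And>l v. pQEP_minimizer H g0 \<gamma> (l, v) \<Longrightarrow> g0 \<bullet> v \<noteq> 0"
  shows "lam < lambda_min H"
proof (rule ccontr)
  assume "\<not> lam < lambda_min H"
  then have lam: "lam = lambda_min H"
    using lam_le_lambda_min by simp
  have "pQEP_minimizer H g0 \<gamma> (lam, u)" if "pQEP_feasible H g0 \<gamma> (lam, u)" for u
    using that lam_le_pQEP_feasible by (auto simp: pQEP_minimizer_def)
  then show False
    using orthogonal_pQEP_feasible_or_secular_root[OF symmetric gamma_pos, of g0]
      lam_le_secular_root assms lam by force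
qed

lemma unique_pLG_minimizer_if_lam_less:
  assumes lam: "lam < lambda_min H"
  shows "\<exists>!p. pLG_minimizer H g0 \<gamma> p"
proof
  let ?y = "- (resolvent H lam *v g0)"
  have "pQEP_feasible H g0 \<gamma> (lam, w)"
    using minimizer by (simp add: pQEP_minimizer_def)
  then have "norm (resolvent H lam *v g0) = \<gamma>"
    by (rule secular_if_pQEP_feasible[OF symmetric lam _ gamma_pos])
  then have feasible: "pLG_feasible H g0 \<gamma> (lam, ?y)"
    using pLG_feasible_below_lambda_min_iff[OF symmetric lam] by blast
  then show "pLG_minimizer H g0 \<gamma> (lam, ?y)"
    using lam_le_pLG_feasible by (auto simp: pLG_minimizer_def)
  fix p assume "pLG_minimizer H g0 \<gamma> p"
  moreover obtain \<mu> y where p: "p = (\<mu>, y)"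
    by fastforce
  ultimately have "pLG_feasible H g0 \<gamma> (\<mu>, y)" and "\<mu> \<le> lam"
    using feasible by (auto simp: pLG_minimizer_def)
  then have "\<mu> = lam"
    using lam_le_pLG_feasible by force
  then show "p = (lam, ?y)"
    using pLG_feasible_below_lambda_min_iff[OF symmetric lam] \<open>pLG_feasible H g0 \<gamma> (\<mu>, y)\<close> p
    by simp
qed

lemma lam_eq_lambda_min:
  assumes "pQEP_minimizer H g0 \<gamma> (l, v)" and "g0 \<bullet> v = 0"
  shows "lam = lambda_min H"
proof -
  have "lambda_min H \<le> l" and "l \<le> lam"
    using assms minimizer lambda_min_le_if_pQEP_feasible_orthogonal[OF symmetric]
    by (auto simp: pQEP_minimizer_def)
  then show ?thesis
    using lam_le_lambda_min by simp
qed

definition x_star :: "real^'n" where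
  "x_star = - (mp_pinv (H - lam *\<^sub>R mat 1) *v g0)"

lemma x_star_in_range:
  "x_star = (H - lam *\<^sub>R mat 1) *v
     (- (mp_pinv (H - lam *\<^sub>R mat 1) *v (mp_pinv (H - lam *\<^sub>R mat 1) *v g0)))"
  unfolding x_star_def
  by (subst mp_pinv_in_range) (simp_all add: transpose_shift symmetric)

lemma x_star_orthogonal_kernel:
  assumes "(H - lam *\<^sub>R mat 1) *v k = 0"
  shows "x_star \<bullet> k = 0"
proof -
  let ?A = "H - lam *\<^sub>R mat 1"
  let ?z = "- (mp_pinv ?A *v (mp_pinv ?A *v g0))"
  have "x_star \<bullet> k = (?A *v ?z) \<bullet> k"
    by (subst x_star_in_range) (rule refl)
  also have "\<dots> = ?z \<bullet> (?A *v k)"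
    by (rule symmetric_matrix_inner) (simp add: transpose_shift symmetric)
  finally show ?thesis
    using assms by simp
qed

(* The hard case: by lam_eq_lambda_min it arises when some pQEP minimizer is orthogonal to g0. *)
context
  assumes lam_eq: "lam = lambda_min H"
begin

lemma secular_unsolvable: "\<mu> < lambda_min H \<Longrightarrow> norm (resolvent H \<mu> *v g0) \<noteq> \<gamma>"
  using lam_le_secular_root lam_eq by force

lemma g0_orthogonal_kernel:
  assumes "(H - lam *\<^sub>R mat 1) *v k = 0"
  shows "g0 \<bullet> k = 0"
proof (rule ccontr)
  assume "g0 \<bullet> k \<noteq> 0"
  moreover have "H *v k = lambda_min H *\<^sub>R k"
    using assms lam_eq by (simp add: matrix_vector_mult_shift)
  ultimately obtain \<mu> where "\<mu> < lambda_min H" "norm (resolvent H \<mu> *v g0) = \<gamma>"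
    using secular_equation_solvable_if_not_orthogonal_eigenvector[OF symmetric _ _ gamma_pos] by blast
  then show False
    using secular_unsolvable by simp
qed

lemma shift_x_star: "(H - lam *\<^sub>R mat 1) *v x_star = - g0"
  unfolding x_star_def
  using mp_pinv_solves[of "H - lam *\<^sub>R mat 1" g0] g0_orthogonal_kernel
  by (simp add: transpose_shift symmetric)

lemma norm_x_star_le: "norm x_star \<le> \<gamma>"
proof (rule norm_le_if_secular_equation_unsolvable[OF symmetric secular_unsolvable gamma_pos])
  show "(H - lambda_min H *\<^sub>R mat 1) *v x_star = - g0"
    unfolding lam_eq[symmetric] by (rule shift_x_star)
  show "x_star = (H - lambda_min H *\<^sub>R mat 1) *v
     (- (mp_pinv (H - lam *\<^sub>R mat 1) *v (mp_pinv (H - lam *\<^sub>R mat 1) *v g0)))"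
    unfolding lam_eq[symmetric] by (rule x_star_in_range)
qed

lemma pLG_feasible_at_lam_iff:
  "pLG_feasible H g0 \<gamma> (lam, y) \<longleftrightarrow>
    (H - lam *\<^sub>R mat 1) *v (y - x_star) = 0 \<and> (norm x_star)\<^sup>2 + (norm (y - x_star))\<^sup>2 = \<gamma>\<^sup>2"
proof -
  have "(H - lam *\<^sub>R mat 1) *v y = - g0 \<longleftrightarrow> (H - lam *\<^sub>R mat 1) *v (y - x_star) = 0"
    by (simp add: matrix_vector_mult_diff_distrib shift_x_star eq_neg_iff_add_eq_0)
  moreover have "(norm y)\<^sup>2 = (norm x_star)\<^sup>2 + (norm (y - x_star))\<^sup>2"
    if "(H - lam *\<^sub>R mat 1) *v (y - x_star) = 0"
    using norm_add_Pythagorean[of x_star "y - x_star"] x_star_orthogonal_kernel[OF that]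
    by (simp add: orthogonal_def)
  ultimately show ?thesis
    using gamma_pos by (auto simp: pLG_feasible_def power2_eq_iff_nonneg)
qed

lemma pLG_feasible_at_lam_exists: "\<exists>y. pLG_feasible H g0 \<gamma> (lam, y)"
proof -
  obtain u where "norm u = 1" and u: "H *v u = lambda_min H *\<^sub>R u"
    using lambda_min_rayleigh[OF symmetric] by blast
  define s where "s = sqrt (\<gamma>\<^sup>2 - (norm x_star)\<^sup>2)"
  have "(norm x_star)\<^sup>2 \<le> \<gamma>\<^sup>2"
    using norm_x_star_le by (simp add: power_mono)
  then have "s\<^sup>2 = \<gamma>\<^sup>2 - (norm x_star)\<^sup>2"
    by (simp add: s_def)
  moreover have "(H - lam *\<^sub>R mat 1) *v (s *\<^sub>R u) = 0"
    using u lam_eq by (simp add: matrix_vector_mult_shift matrix_vector_mult_scaleR)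
  ultimately have "pLG_feasible H g0 \<gamma> (lam, x_star + s *\<^sub>R u)"
    using \<open>norm u = 1\<close> by (simp add: pLG_feasible_at_lam_iff)
  then show ?thesis ..
qed

lemma pLG_minimizer_iff:
  "pLG_minimizer H g0 \<gamma> (\<mu>, y) \<longleftrightarrow> \<mu> = lam \<and> pLG_feasible H g0 \<gamma> (lam, y)"
proof
  assume "pLG_minimizer H g0 \<gamma> (\<mu>, y)"
  then have feasible: "pLG_feasible H g0 \<gamma> (\<mu>, y)"
    and least: "\<And>\<nu> v. pLG_feasible H g0 \<gamma> (\<nu>, v) \<Longrightarrow> \<mu> \<le> \<nu>"
    by (auto simp: pLG_minimizer_def)
  have "\<mu> \<le> lam"
    using pLG_feasible_at_lam_exists least by blast
  then show "\<mu> = lam \<and> pLG_feasible H g0 \<gamma> (lam, y)"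
    using lam_le_pLG_feasible[OF feasible] feasible by simp
next
  assume "\<mu> = lam \<and> pLG_feasible H g0 \<gamma> (lam, y)"
  then show "pLG_minimizer H g0 \<gamma> (\<mu>, y)"
    using lam_le_pLG_feasible by (auto simp: pLG_minimizer_def split_paired_All)
qed

lemma unique_pLG_minimizer_iff: "(\<exists>!p. pLG_minimizer H g0 \<gamma> p) \<longleftrightarrow> norm x_star = \<gamma>"
proof
  assume unique: "\<exists>!p. pLG_minimizer H g0 \<gamma> p"
  obtain y where "pLG_feasible H g0 \<gamma> (lam, y)"
    using pLG_feasible_at_lam_exists by blast
  then have "pLG_feasible H g0 \<gamma> (lam, x_star + (y - x_star))"
    by simp
  then obtain k where k: "pLG_feasible H g0 \<gamma> (lam, x_star + k)" ..
  then have "pLG_feasible H g0 \<gamma> (lam, x_star - k)"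
    by (simp add: pLG_feasible_at_lam_iff)
  then have "pLG_minimizer H g0 \<gamma> (lam, x_star - k)" "pLG_minimizer H g0 \<gamma> (lam, x_star + k)"
    using k by (simp_all add: pLG_minimizer_iff)
  then have "(lam, x_star + k) = (lam, x_star - k)"
    using unique by blast
  then have "2 *\<^sub>R k = 0"
    by (simp add: scaleR_2)
  then have "k = 0"
    by simp
  then show "norm x_star = \<gamma>"
    using k gamma_pos by (simp add: pLG_feasible_at_lam_iff power2_eq_iff_nonneg)
next
  assume "norm x_star = \<gamma>"
  then have "pLG_minimizer H g0 \<gamma> (lam, x_star)"
    by (simp add: pLG_minimizer_iff pLG_feasible_at_lam_iff)
  moreover have "p = (lam, x_star)" if "pLG_minimizer H g0 \<gamma> p" for p
    using that \<open>norm x_star = \<gamma>\<close>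
    by (cases p) (simp add: pLG_minimizer_iff pLG_feasible_at_lam_iff)
  ultimately show "\<exists>!p. pLG_minimizer H g0 \<gamma> p"
    by blast
qed

end

end

theorem theorem2p6:
  fixes H :: "real^'n^'n" and g0 :: "real^'n" and \<gamma> :: real
    and lam :: real and w :: "real^'n"
  assumes "transpose H = H"
    and "g0 \<noteq> 0"
    and "\<gamma> > 0"
    and "pQEP_minimizer H g0 \<gamma> (lam, w)"
  shows "((\<forall>l v. pQEP_minimizer H g0 \<gamma> (l, v) \<longrightarrow> g0 \<bullet> v \<noteq> 0) \<longrightarrow>
           lam < lambda_min H \<and> (\<exists>!p. pLG_minimizer H g0 \<gamma> p))
       \<and> ((\<exists>l v. pQEP_minimizer H g0 \<gamma> (l, v) \<and> g0 \<bullet> v = 0) \<longrightarrow>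
           lam = lambda_min H \<and>
           ((\<exists>!p. pLG_minimizer H g0 \<gamma> p) \<longleftrightarrow>
              norm (- (mp_pinv (H - lam *\<^sub>R mat 1) *v g0)) = \<gamma>))"
proof -
  interpret pQEP_problem H g0 \<gamma> lam w
    using assms by unfold_locales
  show ?thesis
  proof (rule conjI; intro impI)
    assume "\<forall>l v. pQEP_minimizer H g0 \<gamma> (l, v) \<longrightarrow> g0 \<bullet> v \<noteq> 0"
    then have "lam < lambda_min H"
      by (intro lam_less_lambda_min) blast
    then show "lam < lambda_min H \<and> (\<exists>!p. pLG_minimizer H g0 \<gamma> p)"
      using unique_pLG_minimizer_if_lam_less by blast
  next
    assume "\<exists>l v. pQEP_minimizer H g0 \<gamma> (l, v) \<and> g0 \<bullet> v = 0"
    then have "lam = lambda_min H"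
      using lam_eq_lambda_min by blast
    then show "lam = lambda_min H \<and>
        ((\<exists>!p. pLG_minimizer H g0 \<gamma> p) \<longleftrightarrow> norm (- (mp_pinv (H - lam *\<^sub>R mat 1) *v g0)) = \<gamma>)"
      using unique_pLG_minimizer_iff unfolding x_star_def by simp
  qed
qed

end
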